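(* Let $f,g\in\mathrm{PF}$, and assume $f$ is mean Lipschitz smooth with mean Lipschitz constant $L^\mu_f$. Then the convolution $(f*g)(t)=\frac1{2\pi}\int_0^{2\pi}f(t-\tau)g(\tau)\,\mathrm d\tau$ is Lipschitz continuous with Lipschitz constant at most $L^\mu_f$.
   Context: $\mathrm{PF}$ denotes the set of functions $f:\mathbb R\to\mathbb C$ that are $2\pi$-periodic, satisfy $\int_0^{2\pi}f(t)\,\mathrm dt=0$, and $\sup_t|f(t)|\le1$. A $2\pi$-periodic function $f$ is mean Lipschitz smooth with mean Lipschitz constant $L^\mu_f$ if for all $\delta\in(0,\pi]$, $$\frac1{2\pi}\int_0^{2\pi}\sup_{r\in[-\delta,\delta]}|f(t+r)-f(t)|\,\mathrm dt\le L^\mu_f\,\delta.$$ Here a function $u$ is Lipschitz continuous with constant $L$ if $\sup_{r\in[-\delta,\delta]}|u(t+r)-u(t)|\le L\delta$ for all $t\in\mathbb R$, $\delta>0$. *)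

theory Defs
  imports "HOL-Analysis.Analysis"
begin

text \<open>The class PF: 2pi-periodic, mean zero over a period, bounded by 1.
  The integral is the Henstock-Kurzweil integral over [0,2pi]; integrability is
  required so that the mean-zero condition is meaningful.\<close>
definition PF :: "(real \<Rightarrow> complex) \<Rightarrow> bool" where
  "PF f \<longleftrightarrow> (\<forall>t. f (t + 2 * pi) = f t)
     \<and> f integrable_on {0..2*pi}
     \<and> integral {0..2*pi} f = 0
     \<and> (\<forall>t. norm (f t) \<le> 1)"

definition mean_lipschitz :: "(real \<Rightarrow> complex) \<Rightarrow> real \<Rightarrow> bool" where
  "mean_lipschitz f L \<longleftrightarrow> (\<forall>t. f (t + 2 * pi) = f t) \<and>
     (\<forall>\<delta>\<in>{0<..pi}.
        (\<lambda>t. SUP r\<in>{-\<delta>..\<delta>}. norm (f (t + r) - f t)) integrable_on {0..2*pi}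
      \<and> (1 / (2*pi)) * integral {0..2*pi} (\<lambda>t. SUP r\<in>{-\<delta>..\<delta>}. norm (f (t + r) - f t))
          \<le> L * \<delta>)"

definition lipschitz_const :: "(real \<Rightarrow> complex) \<Rightarrow> real \<Rightarrow> bool" where
  "lipschitz_const u L \<longleftrightarrow>
     (\<forall>t \<delta>. \<delta> > 0 \<longrightarrow> (SUP r\<in>{-\<delta>..\<delta>}. norm (u (t + r) - u t)) \<le> L * \<delta>)"

definition conv :: "(real \<Rightarrow> complex) \<Rightarrow> (real \<Rightarrow> complex) \<Rightarrow> real \<Rightarrow> complex" where
  "conv f g t = complex_of_real (1 / (2*pi)) * integral {0..2*pi} (\<lambda>\<tau>. f (t - \<tau>) * g \<tau>)"

end

theory Submission
  imports Defs
begin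

text \<open>Write \<open>u = conv f g\<close>. The increment \<open>u (t + r) - u t\<close> is the mean over \<open>\<tau>\<close> of
  \<open>(f (t + r - \<tau>) - f (t - \<tau>)) * g \<tau>\<close>. As \<open>|g| \<le> 1\<close>, its norm is at most the mean over
  \<open>\<tau>\<close> of the local oscillation of \<open>f\<close> at \<open>t - \<tau>\<close>, which by periodicity equals the mean over
  a full period, i.e. at most \<open>L * \<delta>\<close>. The mean Lipschitz condition only covers
  \<open>\<delta> \<le> pi\<close>, but since \<open>u\<close> is \<open>2 * pi\<close>-periodic every shift reduces to one with
  \<open>|r| \<le> pi\<close>.\<close>

definition local_oscillation :: "(real \<Rightarrow> 'a::real_normed_vector) \<Rightarrow> real \<Rightarrow> real \<Rightarrow> real" where
  "local_oscillation f \<delta> t = (SUP r\<in>{-\<delta>..\<delta>}. norm (f (t + r) - f t))"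

lemma norm_diff_le_local_oscillation:
  fixes f :: "real \<Rightarrow> 'a::real_normed_vector"
  assumes bound: "\<And>x. norm (f x) \<le> B" and r: "\<bar>r\<bar> \<le> \<delta>"
  shows "norm (f (t + r) - f t) \<le> local_oscillation f \<delta> t"
  unfolding local_oscillation_def
proof (rule cSUP_upper)
  show "r \<in> {-\<delta>..\<delta>}" using r by auto
  have "norm (f (t + s) - f t) \<le> B + B" for s
    using norm_triangle_ineq4[of "f (t + s)" "f t"] bound[of "t + s"] bound[of t] by linarith
  then show "bdd_above ((\<lambda>s. norm (f (t + s) - f t)) ` {-\<delta>..\<delta>})"
    by (intro bdd_aboveI2)
qed

lemma local_oscillation_nonneg:
  fixes f :: "real \<Rightarrow> 'a::real_normed_vector"
  assumes "\<And>x. norm (f x) \<le> B" and "0 \<le> \<delta>"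
  shows "0 \<le> local_oscillation f \<delta> t"
  using norm_diff_le_local_oscillation[OF assms(1), where r=0] assms(2) by simp

lemma periodic_local_oscillation:
  assumes "periodic_fun_simple f T"
  shows "periodic_fun_simple (local_oscillation f \<delta>) T"
proof
  fix t
  have "f (t + T + r) = f (t + r)" for r
    using assms by (metis add.commute add.left_commute periodic_fun_simple.plus_period)
  then show "local_oscillation f \<delta> (t + T) = local_oscillation f \<delta> t"
    using assms by (simp add: local_oscillation_def periodic_fun_simple.plus_period)
qed

lemma mean_lipschitzD:
  assumes "mean_lipschitz f L" and "0 < \<delta>" and "\<delta> \<le> pi"
  shows "local_oscillation f \<delta> integrable_on {0..2*pi}"
    and "1 / (2*pi) * integral {0..2*pi} (local_oscillation f \<delta>) \<le> L * \<delta>"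
  using assms by (auto simp: mean_lipschitz_def local_oscillation_def[abs_def])

lemma mean_lipschitz_nonneg:
  assumes "mean_lipschitz f L" and "\<And>x. norm (f x) \<le> B"
  shows "0 \<le> L"
proof -
  have "0 \<le> integral {0..2*pi} (local_oscillation f pi)"
    using mean_lipschitzD(1)[OF assms(1)] local_oscillation_nonneg[OF assms(2)]
    by (intro integral_nonneg) auto
  then have "0 \<le> 1 / (2*pi) * integral {0..2*pi} (local_oscillation f pi)"
    by simp
  also have "\<dots> \<le> L * pi"
    by (rule mean_lipschitzD(2)[OF assms(1)]) simp_all
  finally show ?thesis using pi_gt_zero by (simp add: zero_le_mult_iff)
qed

lemma has_integral_periodic_translate:
  fixes h :: "real \<Rightarrow> 'a::banach"
  assumes per: "periodic_fun_simple h T" and "0 < T" and int: "h integrable_on {0..T}"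
  shows "(h has_integral integral {0..T} h) {c..c+T}"
proof -
  interpret periodic_fun_simple h T by (fact per)
  define n where "n = \<lfloor>c / T\<rfloor>"
  define s where "s = c - of_int n * T"
  have s: "0 \<le> s" "s \<le> T"
    using \<open>0 < T\<close> floor_divide_lower[of T c] floor_divide_upper[of T c]
    unfolding s_def n_def by (simp_all add: algebra_simps)
  have head0: "(h has_integral integral {0..s} h) {0..s}"
    and tail: "(h has_integral integral {s..T} h) {s..T}"
    using integrable_subinterval_real[OF int] s by auto
  have head: "(h has_integral integral {0..s} h) {T..s+T}"
    using has_integral_shift_real_ivl[OF head0, of "-T"] by (simp add: minus_1)
  have "(h has_integral integral {0..T} h) {s..s+T}"
    using has_integral_combine[OF _ _ tail head] s Henstock_Kurzweil_Integration.integral_combine[OF s int]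
    by (simp add: add.commute)
  from has_integral_shift_real_ivl[OF this, of "- of_int n * T"]
  have "((\<lambda>x. h (x - of_int n * T)) has_integral integral {0..T} h) {c..c+T}"
    by (simp add: s_def algebra_simps)
  then show ?thesis by (simp only: minus_of_int)
qed

lemma has_integral_periodic_reflect:
  fixes h :: "real \<Rightarrow> 'a::banach"
  assumes "periodic_fun_simple h T" and "0 < T" and "h integrable_on {0..T}"
  shows "((\<lambda>\<tau>. h (c - \<tau>)) has_integral integral {0..T} h) {0..T}"
proof -
  have "(h has_integral integral {0..T} h) {c-T..c}"
    using has_integral_periodic_translate[OF assms, of "c - T"] by simp
  from has_integral_shift_real_ivl[OF this, of c]
  have "((\<lambda>x. h (x + c)) has_integral integral {0..T} h) {-T..0}" by simp
  from has_integral_reflect_lemma_real[OF this] show ?thesis by simp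
qed

lemma integrable_mult_bounded:
  fixes p q :: "'a::euclidean_space \<Rightarrow> 'b::{euclidean_space, real_normed_div_algebra}"
  assumes "p integrable_on cbox a b" "q integrable_on cbox a b"
    and "\<And>x. norm (p x) \<le> B" "\<And>x. norm (q x) \<le> C"
  shows "(\<lambda>x. p x * q x) integrable_on cbox a b"
proof -
  have "(\<lambda>x. p x * q x) absolutely_integrable_on cbox a b"
  proof (rule measurable_bounded_by_integrable_imp_absolutely_integrable)
    show "(\<lambda>x. p x * q x) \<in> borel_measurable (lebesgue_on (cbox a b))"
      using assms(1,2) by (intro borel_measurable_times integrable_imp_measurable)
    show "norm (p x * q x) \<le> B * C" for x
      using assms(3,4) by (simp add: norm_mult mult_mono' order_trans[OF norm_ge_zero assms(3)])
  qed auto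
  then show ?thesis by (simp add: absolutely_integrable_on_def)
qed

lemma PF_periodic: "PF f \<Longrightarrow> periodic_fun_simple f (2*pi)"
  by (simp add: PF_def periodic_fun_simple_def)

lemma periodic_conv:
  assumes "periodic_fun_simple f T"
  shows "periodic_fun_simple (conv f g) T"
proof
  fix t
  have "f (t + T - \<tau>) = f (t - \<tau>)" for \<tau>
    using periodic_fun_simple.plus_period[OF assms, of "t - \<tau>"] by (simp add: algebra_simps)
  then show "conv f g (t + T) = conv f g t" by (simp add: conv_def)
qed

lemma PF_conv_integrand_integrable:
  assumes f: "PF f" and g: "PF g"
  shows "(\<lambda>\<tau>. f (t - \<tau>) * g \<tau>) integrable_on {0..2*pi}"
proof -
  have "(\<lambda>\<tau>. f (t - \<tau>)) integrable_on {0..2*pi}"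
    using has_integral_periodic_reflect[OF PF_periodic[OF f]] f by (auto simp: PF_def)
  moreover have "g integrable_on {0..2*pi}" and "\<And>x. norm (f x) \<le> 1" "\<And>x. norm (g x) \<le> 1"
    using f g by (auto simp: PF_def)
  ultimately show ?thesis
    using integrable_mult_bounded[of "\<lambda>\<tau>. f (t - \<tau>)" 0 "2*pi" g 1 1] by simp
qed

lemma norm_conv_diff_le_mean_oscillation:
  assumes f: "PF f" and g: "PF g" and r: "\<bar>r\<bar> \<le> \<delta>"
    and osc_int: "local_oscillation f \<delta> integrable_on {0..2*pi}"
  shows "norm (conv f g (t + r) - conv f g t)
           \<le> 1 / (2*pi) * integral {0..2*pi} (local_oscillation f \<delta>)"
proof -
  have f_bound: "\<And>x. norm (f x) \<le> 1" and g_bound: "\<And>x. norm (g x) \<le> 1"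
    using f g by (auto simp: PF_def)
  note prod_int = PF_conv_integrand_integrable[OF f g]
  define D where "D = integral {0..2*pi} (\<lambda>\<tau>. (f (t + r - \<tau>) - f (t - \<tau>)) * g \<tau>)"
  have D_int: "(\<lambda>\<tau>. (f (t + r - \<tau>) - f (t - \<tau>)) * g \<tau>) integrable_on {0..2*pi}"
    using integrable_diff[OF prod_int prod_int] by (simp add: left_diff_distrib)
  have "conv f g (t + r) - conv f g t = of_real (1 / (2*pi)) * D"
    using integral_diff[OF prod_int prod_int]
    by (simp add: conv_def D_def left_diff_distrib right_diff_distrib)
  then have "norm (conv f g (t + r) - conv f g t) = 1 / (2*pi) * norm D"
    by (simp only: norm_mult norm_of_real) simp
  also have "\<dots> \<le> 1 / (2*pi) * integral {0..2*pi} (local_oscillation f \<delta>)"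
  proof (rule mult_left_mono)
    have osc_reflect: "((\<lambda>\<tau>. local_oscillation f \<delta> (t - \<tau>)) has_integral
        integral {0..2*pi} (local_oscillation f \<delta>)) {0..2*pi}"
      using has_integral_periodic_reflect[OF periodic_local_oscillation[OF PF_periodic[OF f]] _ osc_int] by simp
    have pointwise: "norm ((f (t + r - \<tau>) - f (t - \<tau>)) * g \<tau>) \<le> local_oscillation f \<delta> (t - \<tau>)"
      for \<tau>
    proof -
      have "norm ((f (t + r - \<tau>) - f (t - \<tau>)) * g \<tau>)
          = norm (f (t - \<tau> + r) - f (t - \<tau>)) * norm (g \<tau>)"
        by (simp only: norm_mult diff_add_eq)
      also have "\<dots> \<le> norm (f (t - \<tau> + r) - f (t - \<tau>))"
        by (rule mult_left_le[OF g_bound norm_ge_zero])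
      also have "\<dots> \<le> local_oscillation f \<delta> (t - \<tau>)"
        by (rule norm_diff_le_local_oscillation[OF f_bound r])
      finally show ?thesis .
    qed
    have "norm D \<le> integral {0..2*pi} (\<lambda>\<tau>. local_oscillation f \<delta> (t - \<tau>))"
      unfolding D_def
      by (rule integral_norm_bound_integral[OF D_int]) (use osc_reflect pointwise in auto)
    then show "norm D \<le> integral {0..2*pi} (local_oscillation f \<delta>)"
      using integral_unique[OF osc_reflect] by simp
  qed simp
  finally show ?thesis .
qed

lemma periodic_reduce_shift:
  fixes u :: "real \<Rightarrow> 'a" and T r t :: real
  assumes "periodic_fun_simple u T" and "0 < T"
  obtains r' where "\<bar>r'\<bar> \<le> \<bar>r\<bar>" and "\<bar>r'\<bar> \<le> T / 2" and "u (t + r) = u (t + r')"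
proof (cases "\<bar>r\<bar> \<le> T / 2")
  case True
  then show ?thesis by (intro that) auto
next
  case False
  define n where "n = \<lfloor>(r + T / 2) / T\<rfloor>"
  define r' where "r' = r - of_int n * T"
  have "- (T / 2) \<le> r'" "r' < T / 2"
    using \<open>0 < T\<close> floor_divide_lower[of T "r + T / 2"] floor_divide_upper[of T "r + T / 2"]
    unfolding r'_def n_def by (simp_all add: algebra_simps)
  then have small: "\<bar>r'\<bar> \<le> T / 2" by (simp add: abs_le_iff)
  have "u (t + r) = u (t + r' + of_int n * T)" by (simp add: r'_def)
  also have "\<dots> = u (t + r')"
  proof -
    interpret periodic_fun_simple u T by (fact assms(1))
    show ?thesis by (rule plus_of_int)
  qed
  finally show ?thesis
    using small False by (intro that) auto
qed

theorem lemma2: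
  fixes f g :: "real \<Rightarrow> complex" and L :: real
  assumes "PF f" and "PF g" and "mean_lipschitz f L"
  shows "lipschitz_const (conv f g) L"
  unfolding lipschitz_const_def
proof (intro allI impI)
  fix t \<delta> :: real
  assume "0 < \<delta>"
  define d where "d = min \<delta> pi"
  have d: "0 < d" "d \<le> pi" "d \<le> \<delta>" using \<open>0 < \<delta>\<close> by (auto simp: d_def)
  have "0 \<le> L"
    using mean_lipschitz_nonneg[OF assms(3)] assms(1) by (auto simp: PF_def)
  have "norm (conv f g (t + r) - conv f g t) \<le> L * \<delta>" if "r \<in> {-\<delta>..\<delta>}" for r
  proof -
    have "0 < 2 * pi" by simp
    then obtain r' where "\<bar>r'\<bar> \<le> \<bar>r\<bar>" "\<bar>r'\<bar> \<le> 2 * pi / 2"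
      and shift: "conv f g (t + r) = conv f g (t + r')"
      using periodic_reduce_shift[OF periodic_conv[OF PF_periodic[OF assms(1)]]] by blast
    then have r': "\<bar>r'\<bar> \<le> d" using that by (auto simp: d_def)
    have "norm (conv f g (t + r) - conv f g t)
        \<le> 1 / (2*pi) * integral {0..2*pi} (local_oscillation f d)"
      unfolding shift
      by (rule norm_conv_diff_le_mean_oscillation[OF assms(1,2) r' mean_lipschitzD(1)[OF assms(3) d(1,2)]])
    also have "\<dots> \<le> L * d" by (rule mean_lipschitzD(2)[OF assms(3) d(1,2)])
    also have "\<dots> \<le> L * \<delta>" by (rule mult_left_mono[OF d(3) \<open>0 \<le> L\<close>])
    finally show ?thesis .
  qed
  then show "(SUP r\<in>{-\<delta>..\<delta>}. norm (conv f g (t + r) - conv f g t)) \<le> L * \<delta>"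
    using \<open>0 < \<delta>\<close> by (intro cSUP_least) auto
qed

end
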